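(* Let $X$ be a semigroup. If all idempotents of the semigroup $\beta(X)$ commute, then every cyclic subsemigroup of $X$ and every linear subsemigroup of $X$ is finite.
   Context: $\beta(X)$ is the set of all ultrafilters on $X$, with each $x\in X$ identified with the principal ultrafilter $\langle x\rangle=\{A\subset X:x\in A\}$, endowed with the operation $\mathcal A*\mathcal B=\big\langle \bigcup_{a\in A} a*B_a : A\in\mathcal A,\ \{B_a\}_{a\in A}\subset\mathcal B\big\rangle$, where $\langle\mathcal C\rangle=\{A\subset X:\exists C\in\mathcal C,\ C\subset A\}$ (this makes $\beta(X)$ a semigroup). A semigroup $S$ is cyclic if $S=\{x^n:n\in\mathbb N\}$ for some $x\in S$; linear if $xy\in\{x,y\}$ for all $x,y\in S$. *)

theory Defs
  imports Main
begin

text \<open>The semigroup X is the whole carrier of a type of class semigroup_mult.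
  Ultrafilters on X are represented as sets of subsets of X.\<close>

definition is_ultrafilter :: "'a set set \<Rightarrow> bool" where
  "is_ultrafilter U \<longleftrightarrow>
     UNIV \<in> U \<and> {} \<notin> U \<and>
     (\<forall>A B. A \<in> U \<and> A \<subseteq> B \<longrightarrow> B \<in> U) \<and>
     (\<forall>A B. A \<in> U \<and> B \<in> U \<longrightarrow> A \<inter> B \<in> U) \<and>
     (\<forall>A. A \<in> U \<or> - A \<in> U)"

definition ult_mult :: "'a::semigroup_mult set set \<Rightarrow> 'a set set \<Rightarrow> 'a set set" where
  "ult_mult P Q = {C. \<exists>A\<in>P. \<exists>B. (\<forall>a\<in>A. B a \<in> Q) \<and>
                        (\<Union>a\<in>A. (\<lambda>b. a * b) ` B a) \<subseteq> C}"

definition ult_idempotent :: "'a::semigroup_mult set set \<Rightarrow> bool" where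
  "ult_idempotent p \<longleftrightarrow> is_ultrafilter p \<and> ult_mult p p = p"

text \<open>spow x n = x^(n+1).\<close>

fun spow :: "'a::semigroup_mult \<Rightarrow> nat \<Rightarrow> 'a" where
  "spow x 0 = x"
| "spow x (Suc n) = spow x n * x"

definition subsemigroup :: "'a::semigroup_mult set \<Rightarrow> bool" where
  "subsemigroup S \<longleftrightarrow> (\<forall>x\<in>S. \<forall>y\<in>S. x * y \<in> S)"

definition cyclic_semigroup :: "'a::semigroup_mult set \<Rightarrow> bool" where
  "cyclic_semigroup S \<longleftrightarrow> (\<exists>x\<in>S. S = range (spow x))"

definition linear_semigroup :: "'a::semigroup_mult set \<Rightarrow> bool" where
  "linear_semigroup S \<longleftrightarrow> (\<forall>x\<in>S. \<forall>y\<in>S. x * y \<in> {x, y})"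

end

theory Submission
  imports Defs "HOL-Library.Ramsey"
begin

text \<open>
  We show that the semigroup \<open>\<beta>(X)\<close> of ultrafilters on a semigroup \<open>X\<close> has two idempotents
  that do not commute as soon as \<open>X\<close> contains an infinite cyclic or an infinite linear
  subsemigroup; the theorem is the contrapositive.

  A closed
  subset of \<open>\<beta>(X)\<close> is represented as the set \<open>ufs F\<close> of ultrafilters extending a family \<open>F\<close>;
  the Ellis--Numakura lemma (every nonempty closed subsemigroup contains an idempotent) is
  then proved by the usual minimality argument, with compactness replaced by explicit
  ultrafilter constructions.

  For an infinite linear subsemigroup, Ramsey's theorem yields an injective sequence on which
  the product is either always the left or always the right factor; two ultrafilters
  concentrated on its even resp. odd terms then form a left (resp. right) zero band.
  For an infinite cyclic subsemigroup \<open>{x^N}\<close>, the sets of powers \<open>x^N\<close> with \<open>2^k\<close> dividing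
  \<open>N\<close> and with the 2-adic valuation of \<open>N\<close> of parity \<open>r\<close> generate, for \<open>r = 0, 1\<close>, closed
  subsemigroups whose idempotents \<open>p, q\<close> satisfy \<open>p * q \<noteq> q * p\<close>.
\<close>


subsection \<open>Filters and ultrafilters\<close>

text \<open>Filters of subsets (possibly containing \<open>{}\<close>), and the elementary closure properties of
  ultrafilters.\<close>

definition set_filter :: "'a set set \<Rightarrow> bool" where
  "set_filter F \<longleftrightarrow> UNIV \<in> F \<and> (\<forall>A B. A \<in> F \<and> A \<subseteq> B \<longrightarrow> B \<in> F) \<and>
                    (\<forall>A B. A \<in> F \<and> B \<in> F \<longrightarrow> A \<inter> B \<in> F)"

lemma uf_up: "is_ultrafilter U \<Longrightarrow> A \<in> U \<Longrightarrow> A \<subseteq> B \<Longrightarrow> B \<in> U"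
  unfolding is_ultrafilter_def by blast

lemma uf_Int_iff: "is_ultrafilter U \<Longrightarrow> A \<inter> B \<in> U \<longleftrightarrow> A \<in> U \<and> B \<in> U"
  unfolding is_ultrafilter_def by (metis Int_lower1 Int_lower2)

lemma uf_Compl_iff: "is_ultrafilter U \<Longrightarrow> - A \<in> U \<longleftrightarrow> A \<notin> U"
  unfolding is_ultrafilter_def by (metis Int_commute Compl_disjoint)

lemma uf_empty: "is_ultrafilter U \<Longrightarrow> {} \<notin> U"
  unfolding is_ultrafilter_def by blast

lemma uf_UNIV: "is_ultrafilter U \<Longrightarrow> UNIV \<in> U"
  unfolding is_ultrafilter_def by blast

lemma uf_disjoint: "is_ultrafilter U \<Longrightarrow> A \<in> U \<Longrightarrow> B \<in> U \<Longrightarrow> A \<inter> B \<noteq> {}"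
  by (metis uf_Int_iff uf_empty)

lemma ultrafilter_eqI:
  assumes "is_ultrafilter p" "is_ultrafilter q" "p \<subseteq> q"
  shows "p = q"
proof
  show "q \<subseteq> p"
  proof
    fix A assume "A \<in> q"
    then have "- A \<notin> q" using uf_Compl_iff[OF assms(2)] by blast
    then have "- A \<notin> p" using assms(3) by blast
    then show "A \<in> p" using uf_Compl_iff[OF assms(1)] by blast
  qed
qed (rule assms(3))

lemma set_filter_Union_chain:
  assumes "C \<noteq> {}" "chain\<^sub>\<subseteq> C" "\<And>G. G \<in> C \<Longrightarrow> set_filter G"
  shows "set_filter (\<Union>C)"
  unfolding set_filter_def
proof (intro conjI allI impI)
  show "UNIV \<in> \<Union>C" using assms(1,3) unfolding set_filter_def by blast
  fix A B
  show "A \<in> \<Union>C \<and> A \<subseteq> B \<Longrightarrow> B \<in> \<Union>C" using assms(3) unfolding set_filter_def by blast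
  assume "A \<in> \<Union>C \<and> B \<in> \<Union>C"
  then obtain G H where "G \<in> C" "H \<in> C" "A \<in> G" "B \<in> H" by blast
  with assms(2) have "A \<in> H \<and> B \<in> H \<or> A \<in> G \<and> B \<in> G" unfolding chain_subset_def by blast
  then show "A \<inter> B \<in> \<Union>C" using assms(3) \<open>G \<in> C\<close> \<open>H \<in> C\<close> unfolding set_filter_def by blast
qed

lemma Zorn_nonempty_chains:
  assumes "\<A> \<noteq> {}" and "\<And>C. C \<noteq> {} \<Longrightarrow> C \<in> chains \<A> \<Longrightarrow> \<Union>C \<in> \<A>"
  shows "\<exists>M\<in>\<A>. \<forall>X\<in>\<A>. M \<subseteq> X \<longrightarrow> X = M"
proof (rule Zorn_Lemma2, intro ballI)
  fix C assume "C \<in> chains \<A>"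
  then show "\<exists>U\<in>\<A>. \<forall>X\<in>C. X \<subseteq> U"
    using assms by (cases "C = {}") blast+
qed

lemma ultrafilter_exists:
  assumes F: "set_filter F" and proper: "{} \<notin> F"
  shows "\<exists>p. is_ultrafilter p \<and> F \<subseteq> p"
proof -
  define \<M> where "\<M> = {G. F \<subseteq> G \<and> set_filter G \<and> {} \<notin> G}"
  have "\<exists>M\<in>\<M>. \<forall>X\<in>\<M>. M \<subseteq> X \<longrightarrow> X = M"
  proof (rule Zorn_nonempty_chains)
    show "\<M> \<noteq> {}" using F proper unfolding \<M>_def by blast
    fix C assume C: "C \<noteq> {}" "C \<in> chains \<M>"
    then have sub: "C \<subseteq> \<M>" and ch: "chain\<^sub>\<subseteq> C" unfolding chains_def by auto
    have "set_filter (\<Union>C)" using set_filter_Union_chain[OF C(1) ch] sub unfolding \<M>_def by blast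
    moreover have "F \<subseteq> \<Union>C" "{} \<notin> \<Union>C" using sub C(1) unfolding \<M>_def by auto
    ultimately show "\<Union>C \<in> \<M>" unfolding \<M>_def by blast
  qed
  then obtain M where "M \<in> \<M>" and max: "\<And>X. X \<in> \<M> \<Longrightarrow> M \<subseteq> X \<Longrightarrow> X = M"
    by blast
  then have M: "F \<subseteq> M" "set_filter M" "{} \<notin> M" unfolding \<M>_def by auto
  have "A \<in> M \<or> - A \<in> M" for A
  proof (rule ccontr)
    assume undecided: "\<not> (A \<in> M \<or> - A \<in> M)"
    \<comment> \<open>Adjoining \<open>A\<close> to \<open>M\<close> would give a strictly larger proper filter.\<close>
    define M' where "M' = {X. \<exists>B\<in>M. B \<inter> A \<subseteq> X}"
    have "set_filter M'"
      unfolding set_filter_def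
    proof (intro conjI allI impI)
      show "UNIV \<in> M'" using M(2) unfolding set_filter_def M'_def by blast
      fix X Y
      show "X \<in> M' \<and> X \<subseteq> Y \<Longrightarrow> Y \<in> M'" unfolding M'_def by blast
      assume "X \<in> M' \<and> Y \<in> M'"
      then obtain B1 B2 where "B1 \<in> M" "B2 \<in> M" "B1 \<inter> A \<subseteq> X" "B2 \<inter> A \<subseteq> Y"
        unfolding M'_def by blast
      moreover have "B1 \<inter> B2 \<in> M" using \<open>B1 \<in> M\<close> \<open>B2 \<in> M\<close> M(2) unfolding set_filter_def by blast
      ultimately show "X \<inter> Y \<in> M'" unfolding M'_def by blast
    qed
    moreover have "{} \<notin> M'"
    proof
      assume "{} \<in> M'"
      then obtain B where "B \<in> M" "B \<subseteq> - A" unfolding M'_def by auto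
      then show False using undecided M(2) unfolding set_filter_def by blast
    qed
    moreover have "M \<subseteq> M'" unfolding M'_def by blast
    ultimately have "M' \<in> \<M>" using M(1) unfolding \<M>_def by blast
    then have "M' = M" using max \<open>M \<subseteq> M'\<close> by blast
    moreover have "A \<in> M'" unfolding M'_def using M(2) unfolding set_filter_def by blast
    ultimately show False using undecided by blast
  qed
  moreover have "UNIV \<in> M" "\<forall>A B. A \<in> M \<and> A \<subseteq> B \<longrightarrow> B \<in> M"
    "\<forall>A B. A \<in> M \<and> B \<in> M \<longrightarrow> A \<inter> B \<in> M"
    using M(2) unfolding set_filter_def by blast+
  ultimately have "is_ultrafilter M" using M(3) unfolding is_ultrafilter_def by blast
  then show ?thesis using M(1) by blast
qed

lemma ultrafilter_extends_base:
  assumes "B \<noteq> {}" "{} \<notin> B" "\<And>X Y. X \<in> B \<Longrightarrow> Y \<in> B \<Longrightarrow> \<exists>Z\<in>B. Z \<subseteq> X \<inter> Y"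
  shows "\<exists>p. is_ultrafilter p \<and> B \<subseteq> p"
proof -
  define F where "F = {X. \<exists>Z\<in>B. Z \<subseteq> X}"
  have "set_filter F"
    unfolding set_filter_def F_def
  proof (intro conjI allI impI)
    show "UNIV \<in> {X. \<exists>Z\<in>B. Z \<subseteq> X}" using assms(1) by blast
    fix X Y
    show "X \<in> {X. \<exists>Z\<in>B. Z \<subseteq> X} \<and> X \<subseteq> Y \<Longrightarrow> Y \<in> {X. \<exists>Z\<in>B. Z \<subseteq> X}" by blast
    assume "X \<in> {X. \<exists>Z\<in>B. Z \<subseteq> X} \<and> Y \<in> {X. \<exists>Z\<in>B. Z \<subseteq> X}"
    then obtain Z1 Z2 where "Z1 \<in> B" "Z2 \<in> B" "Z1 \<subseteq> X" "Z2 \<subseteq> Y" by blast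
    then show "X \<inter> Y \<in> {X. \<exists>Z\<in>B. Z \<subseteq> X}" using assms(3)[of Z1 Z2] by blast
  qed
  moreover have "{} \<notin> F" "B \<subseteq> F" using assms(2) unfolding F_def by auto
  ultimately show ?thesis using ultrafilter_exists by blast
qed

lemma ultrafilter_extends_chain:
  fixes A :: "nat \<Rightarrow> 'a set"
  assumes "antimono A" "\<And>n. A n \<noteq> {}"
  shows "\<exists>p. is_ultrafilter p \<and> (\<forall>n. A n \<in> p)"
proof -
  have "\<exists>Z\<in>range A. Z \<subseteq> A m \<inter> A n" for m n
    using antimonoD[OF assms(1), of m "max m n"] antimonoD[OF assms(1), of n "max m n"] by auto
  then have "\<exists>p. is_ultrafilter p \<and> range A \<subseteq> p"
    using assms(2) by (intro ultrafilter_extends_base) (auto simp: image_iff, metis)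
  then show ?thesis by blast
qed


subsection \<open>The product on \<open>\<beta>(X)\<close>\<close>

definition left_quot :: "'a::semigroup_mult set \<Rightarrow> 'a \<Rightarrow> 'a set" where
  "left_quot C a = {b. a * b \<in> C}"

lemma left_quot_Int: "left_quot (A \<inter> B) a = left_quot A a \<inter> left_quot B a"
  and left_quot_Compl: "left_quot (- A) a = - left_quot A a"
  and left_quot_UNIV: "left_quot UNIV a = UNIV"
  unfolding left_quot_def by auto

lemma ult_mult_iff:
  assumes p: "is_ultrafilter p" and q: "is_ultrafilter q"
  shows "C \<in> ult_mult p q \<longleftrightarrow> {a. left_quot C a \<in> q} \<in> p"
proof
  assume "C \<in> ult_mult p q"
  then obtain A B where A: "A \<in> p" "\<forall>a\<in>A. B a \<in> q" "(\<Union>a\<in>A. (\<lambda>b. a * b) ` B a) \<subseteq> C"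
    unfolding ult_mult_def by (auto simp only: mem_Collect_eq)
  have "A \<subseteq> {a. left_quot C a \<in> q}"
  proof
    fix a assume "a \<in> A"
    then have "B a \<subseteq> left_quot C a" using A(3) unfolding left_quot_def by blast
    then show "a \<in> {a. left_quot C a \<in> q}" using A(2) \<open>a \<in> A\<close> uf_up[OF q] by blast
  qed
  then show "{a. left_quot C a \<in> q} \<in> p" using uf_up[OF p] A(1) by blast
next
  assume "{a. left_quot C a \<in> q} \<in> p"
  moreover have "(\<Union>a\<in>{a. left_quot C a \<in> q}. (\<lambda>b. a * b) ` left_quot C a) \<subseteq> C"
    unfolding left_quot_def by blast
  ultimately show "C \<in> ult_mult p q" unfolding ult_mult_def
    by (intro CollectI bexI[of _ "{a. left_quot C a \<in> q}"] exI[of _ "left_quot C"] conjI) auto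
qed

lemma ult_mult_ultrafilter:
  assumes p: "is_ultrafilter p" and q: "is_ultrafilter q"
  shows "is_ultrafilter (ult_mult p q)"
proof -
  note mult_iff = ult_mult_iff[OF p q]
  have "UNIV \<in> ult_mult p q"
    unfolding mult_iff left_quot_UNIV using uf_UNIV[OF p] uf_UNIV[OF q] by simp
  moreover have "{} \<notin> ult_mult p q"
    unfolding mult_iff left_quot_def using uf_empty[OF p] uf_empty[OF q] by simp
  moreover have "B \<in> ult_mult p q" if "A \<in> ult_mult p q" "A \<subseteq> B" for A B
  proof -
    have "left_quot A a \<subseteq> left_quot B a" for a using that(2) unfolding left_quot_def by blast
    then have "{a. left_quot A a \<in> q} \<subseteq> {a. left_quot B a \<in> q}" using uf_up[OF q] by blast
    then show ?thesis using that(1) uf_up[OF p] unfolding mult_iff by blast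
  qed
  moreover have "A \<inter> B \<in> ult_mult p q \<longleftrightarrow> A \<in> ult_mult p q \<and> B \<in> ult_mult p q" for A B
  proof -
    have "{a. left_quot (A \<inter> B) a \<in> q} = {a. left_quot A a \<in> q} \<inter> {a. left_quot B a \<in> q}"
      using uf_Int_iff[OF q] by (auto simp: left_quot_Int)
    then show ?thesis using uf_Int_iff[OF p] unfolding mult_iff by simp
  qed
  moreover have "A \<in> ult_mult p q \<or> - A \<in> ult_mult p q" for A
  proof -
    have "{a. left_quot (- A) a \<in> q} = - {a. left_quot A a \<in> q}"
      using uf_Compl_iff[OF q] by (auto simp: left_quot_Compl)
    then show ?thesis using uf_Compl_iff[OF p] unfolding mult_iff by simp
  qed
  ultimately show ?thesis unfolding is_ultrafilter_def by blast
qed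

lemma ult_mult_assoc:
  assumes p: "is_ultrafilter p" and q: "is_ultrafilter q" and r: "is_ultrafilter r"
  shows "ult_mult (ult_mult p q) r = ult_mult p (ult_mult q r)"
proof -
  have pq: "is_ultrafilter (ult_mult p q)" and qr: "is_ultrafilter (ult_mult q r)"
    using ult_mult_ultrafilter assms by auto
  have "C \<in> ult_mult (ult_mult p q) r \<longleftrightarrow> C \<in> ult_mult p (ult_mult q r)" for C
  proof -
    \<comment> \<open>Associativity of \<open>X\<close> in the form \<open>(ab)\<inverse>C = b\<inverse>(a\<inverse>C)\<close>.\<close>
    have quot: "left_quot {x. left_quot C x \<in> r} a = {b. left_quot (left_quot C a) b \<in> r}" for a
      unfolding left_quot_def by (simp add: mult.assoc)
    have "C \<in> ult_mult (ult_mult p q) r \<longleftrightarrow> {x. left_quot C x \<in> r} \<in> ult_mult p q"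
      by (rule ult_mult_iff[OF pq r])
    also have "\<dots> \<longleftrightarrow> {a. {b. left_quot (left_quot C a) b \<in> r} \<in> q} \<in> p"
      unfolding ult_mult_iff[OF p q] quot ..
    also have "{a. {b. left_quot (left_quot C a) b \<in> r} \<in> q} = {a. left_quot C a \<in> ult_mult q r}"
      using ult_mult_iff[OF q r] by blast
    also have "\<dots> \<in> p \<longleftrightarrow> C \<in> ult_mult p (ult_mult q r)"
      using ult_mult_iff[OF p qr] by blast
    finally show ?thesis .
  qed
  then show ?thesis by blast
qed


subsection \<open>Closed subsemigroups and the Ellis--Numakura lemma\<close>

text \<open>A family \<open>F\<close> of subsets of \<open>X\<close> determines the closed set \<open>ufs F\<close> of ultrafilters
  extending it; every closed subset of \<open>\<beta>(X)\<close> is of this form.\<close>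

definition ufs :: "'a set set \<Rightarrow> 'a set set set" where
  "ufs F = {p. is_ultrafilter p \<and> F \<subseteq> p}"

definition mult_closed :: "'a::semigroup_mult set set set \<Rightarrow> bool" where
  "mult_closed T \<longleftrightarrow> (\<forall>p\<in>T. \<forall>q\<in>T. ult_mult p q \<in> T)"

text \<open>The largest family describing the closed set \<open>ufs F\<close>; it is a filter.\<close>

definition hull_filter :: "'a set set \<Rightarrow> 'a set set" where
  "hull_filter F = {A. \<forall>p\<in>ufs F. A \<in> p}"

lemma ufs_hull_filter: "ufs (hull_filter F) = ufs F"
  unfolding ufs_def hull_filter_def by blast

lemma subset_hull_filter: "F \<subseteq> hull_filter F"
  unfolding hull_filter_def ufs_def by blast

lemma set_filter_hull_filter: "set_filter (hull_filter F)"
  unfolding set_filter_def hull_filter_def ufs_def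
  by (auto intro: uf_UNIV uf_up simp: uf_Int_iff)

text \<open>By Zorn's lemma, a nonempty closed subsemigroup contains a minimal one, described by a
  maximal filter \<open>M\<close>: any larger family still describing a nonempty closed subsemigroup
  describes the same set.\<close>

lemma minimal_closed_subsemigroup:
  fixes F0 :: "'a::semigroup_mult set set"
  assumes "ufs F0 \<noteq> {}" "mult_closed (ufs F0)"
  obtains M where "set_filter M" "F0 \<subseteq> M" "ufs M \<noteq> {}" "mult_closed (ufs M)"
    "\<And>G. M \<subseteq> G \<Longrightarrow> ufs G \<noteq> {} \<Longrightarrow> mult_closed (ufs G) \<Longrightarrow> ufs G = ufs M"
proof -
  define \<A> where "\<A> = {F. set_filter F \<and> F0 \<subseteq> F \<and> {} \<notin> F \<and> mult_closed (ufs (F :: 'a set set))}"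
  have nonempty_iff: "{} \<notin> F \<longleftrightarrow> ufs F \<noteq> {}" if "set_filter F" for F :: "'a set set"
    using ultrafilter_exists[OF that] uf_empty unfolding ufs_def by blast
  have hull_in: "hull_filter G \<in> \<A>" if "F0 \<subseteq> G" "ufs G \<noteq> {}" "mult_closed (ufs G)" for G
  proof -
    have "{} \<notin> hull_filter G"
      using nonempty_iff[OF set_filter_hull_filter] that(2) by (simp add: ufs_hull_filter)
    moreover have "F0 \<subseteq> hull_filter G" using that(1) subset_hull_filter[of G] by blast
    ultimately show ?thesis
      unfolding \<A>_def using set_filter_hull_filter that(3) by (simp add: ufs_hull_filter)
  qed
  have "\<exists>M\<in>\<A>. \<forall>X\<in>\<A>. M \<subseteq> X \<longrightarrow> X = M"
  proof (rule Zorn_nonempty_chains)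
    show "\<A> \<noteq> {}" using hull_in[of F0] assms by blast
    fix C assume C: "C \<noteq> {}" "C \<in> chains \<A>"
    then have sub: "C \<subseteq> \<A>" and ch: "chain\<^sub>\<subseteq> C" unfolding chains_def by auto
    have "set_filter (\<Union>C)" using set_filter_Union_chain[OF C(1) ch] sub unfolding \<A>_def by blast
    moreover have "F0 \<subseteq> \<Union>C" "{} \<notin> \<Union>C" using sub C(1) unfolding \<A>_def by auto
    moreover have "mult_closed (ufs (\<Union>C))" unfolding mult_closed_def
    proof (intro ballI)
      fix p q assume pq: "p \<in> ufs (\<Union>C)" "q \<in> ufs (\<Union>C)"
      have "F \<subseteq> ult_mult p q" if "F \<in> C" for F
      proof -
        have "p \<in> ufs F" "q \<in> ufs F" using pq that unfolding ufs_def by auto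
        moreover have "mult_closed (ufs F)" using sub that unfolding \<A>_def by blast
        ultimately show ?thesis unfolding mult_closed_def ufs_def by blast
      qed
      then show "ult_mult p q \<in> ufs (\<Union>C)"
        using pq ult_mult_ultrafilter unfolding ufs_def by blast
    qed
    ultimately show "\<Union>C \<in> \<A>" unfolding \<A>_def by blast
  qed
  then obtain M where "M \<in> \<A>" and max: "\<And>X. X \<in> \<A> \<Longrightarrow> M \<subseteq> X \<Longrightarrow> X = M"
    by blast
  then have M: "set_filter M" "F0 \<subseteq> M" "ufs M \<noteq> {}" "mult_closed (ufs M)"
    unfolding \<A>_def using nonempty_iff by auto
  have "ufs G = ufs M" if "M \<subseteq> G" "ufs G \<noteq> {}" "mult_closed (ufs G)" for G
  proof -
    have "hull_filter G \<in> \<A>" using hull_in that M(2) by blast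
    moreover have "M \<subseteq> hull_filter G" using that(1) subset_hull_filter[of G] by blast
    ultimately have "hull_filter G = M" using max by blast
    then show ?thesis using ufs_hull_filter[of G] by simp
  qed
  with M that show thesis by blast
qed

text \<open>The right orbit \<open>ufs M * p\<close> is closed (it is the image of a compact set under the
  continuous map \<open>q \<mapsto> q * p\<close>).  The key step: if \<open>r\<close> extends the family of sets lying in
  all products \<open>q * p\<close> (\<open>q \<in> ufs M\<close>), then each \<open>A \<in> M\<close> meets \<open>{a. a\<inverse>C \<in> p}\<close> for
  every \<open>C \<in> r\<close>; otherwise \<open>-C\<close> would lie in all these products, hence in \<open>r\<close>.\<close>

lemma right_orbit_meets:
  fixes p :: "'a::semigroup_mult set set"
  assumes p: "is_ultrafilter p" and r: "is_ultrafilter r"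
    and r_ext: "{C. \<forall>q\<in>ufs M. C \<in> ult_mult q p} \<subseteq> r"
    and "A \<in> M" "C \<in> r"
  shows "A \<inter> {a. left_quot C a \<in> p} \<noteq> {}"
proof
  assume disjoint: "A \<inter> {a. left_quot C a \<in> p} = {}"
  have "- C \<in> ult_mult q p" if "q \<in> ufs M" for q
  proof -
    have q: "is_ultrafilter q" "A \<in> q" using that \<open>A \<in> M\<close> unfolding ufs_def by auto
    then have "{a. left_quot C a \<in> p} \<notin> q" using disjoint uf_disjoint by blast
    then have "C \<notin> ult_mult q p" using ult_mult_iff[OF q(1) p] by blast
    then show ?thesis using uf_Compl_iff[OF ult_mult_ultrafilter[OF q(1) p]] by blast
  qed
  then have "- C \<in> r" using r_ext by blast
  then show False using \<open>C \<in> r\<close> uf_Compl_iff[OF r] by blast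
qed

text \<open>Consequently the sets \<open>A \<inter> {a. a\<inverse>C \<in> p}\<close> (\<open>A \<in> M\<close>, \<open>C \<in> r\<close>) form a filter base, and
  an ultrafilter \<open>q\<close> extending it satisfies \<open>q \<in> ufs M\<close> and \<open>r = q * p\<close>.\<close>

lemma right_orbit_closed:
  fixes p :: "'a::semigroup_mult set set"
  assumes p: "is_ultrafilter p" and M: "set_filter M" and r: "is_ultrafilter r"
    and r_ext: "{C. \<forall>q\<in>ufs M. C \<in> ult_mult q p} \<subseteq> r"
  shows "\<exists>q\<in>ufs M. r = ult_mult q p"
proof -
  define H where "H = {A \<inter> {a. left_quot C a \<in> p} | A C. A \<in> M \<and> C \<in> r}"
  have H_memI: "A \<inter> {a. left_quot C a \<in> p} \<in> H" if "A \<in> M" "C \<in> r" for A C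
    unfolding H_def using that by blast
  have M_UNIV: "UNIV \<in> M" and M_Int: "\<And>X Y. X \<in> M \<Longrightarrow> Y \<in> M \<Longrightarrow> X \<inter> Y \<in> M"
    using M unfolding set_filter_def by blast+
  have "{} \<notin> H" using right_orbit_meets[OF p r r_ext] unfolding H_def by blast
  moreover have "\<exists>Z\<in>H. Z \<subseteq> X \<inter> Y" if "X \<in> H" "Y \<in> H" for X Y
  proof -
    obtain A C where X: "X = A \<inter> {a. left_quot C a \<in> p}" "A \<in> M" "C \<in> r"
      using \<open>X \<in> H\<close> unfolding H_def by blast
    obtain A' C' where Y: "Y = A' \<inter> {a. left_quot C' a \<in> p}" "A' \<in> M" "C' \<in> r"
      using \<open>Y \<in> H\<close> unfolding H_def by blast
    have "A \<inter> A' \<in> M" "C \<inter> C' \<in> r" using M_Int X Y uf_Int_iff[OF r] by auto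
    then have "(A \<inter> A') \<inter> {a. left_quot (C \<inter> C') a \<in> p} \<in> H" by (rule H_memI)
    moreover have "(A \<inter> A') \<inter> {a. left_quot (C \<inter> C') a \<in> p} \<subseteq> X \<inter> Y"
      unfolding X Y using uf_Int_iff[OF p] by (auto simp: left_quot_Int)
    ultimately show ?thesis by blast
  qed
  moreover have "H \<noteq> {}" using H_memI[OF M_UNIV uf_UNIV[OF r]] by blast
  ultimately obtain q where q: "is_ultrafilter q" "H \<subseteq> q"
    using ultrafilter_extends_base[of H] by auto
  have "A \<in> q" if "A \<in> M" for A
    using H_memI[OF that uf_UNIV[OF r]] q uf_up[OF q(1)] by blast
  then have qM: "q \<in> ufs M" unfolding ufs_def using q by blast
  have "r \<subseteq> ult_mult q p"
  proof
    fix C assume "C \<in> r"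
    then have "UNIV \<inter> {a. left_quot C a \<in> p} \<in> q" using H_memI M_UNIV q(2) by blast
    then show "C \<in> ult_mult q p" using ult_mult_iff[OF q(1) p] by simp
  qed
  then have "r = ult_mult q p" using ultrafilter_eqI[OF r ult_mult_ultrafilter[OF q(1) p]] by blast
  then show ?thesis using qM by blast
qed

lemma ufs_stabiliser:
  assumes p: "is_ultrafilter p"
  shows "q \<in> ufs (M \<union> {{a. left_quot C a \<in> p} | C. C \<in> p}) \<longleftrightarrow> q \<in> ufs M \<and> ult_mult q p = p"
proof
  assume q: "q \<in> ufs (M \<union> {{a. left_quot C a \<in> p} | C. C \<in> p})"
  then have q_uf: "is_ultrafilter q" and "q \<in> ufs M" unfolding ufs_def by auto
  moreover have "p \<subseteq> ult_mult q p"
  proof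
    fix C assume "C \<in> p"
    then have "{a. left_quot C a \<in> p} \<in> q" using q unfolding ufs_def by blast
    then show "C \<in> ult_mult q p" using ult_mult_iff[OF q_uf p] by blast
  qed
  then have "ult_mult q p = p" using ultrafilter_eqI[OF p ult_mult_ultrafilter[OF q_uf p]] by (simp only: eq_commute)
  ultimately show "q \<in> ufs M \<and> ult_mult q p = p" by blast
next
  assume q: "q \<in> ufs M \<and> ult_mult q p = p"
  then have q_uf: "is_ultrafilter q" unfolding ufs_def by auto
  have "{a. left_quot C a \<in> p} \<in> q" if "C \<in> p" for C
  proof -
    have "C \<in> ult_mult q p" using that q by simp
    then show ?thesis using ult_mult_iff[OF q_uf p] by blast
  qed
  then show "q \<in> ufs (M \<union> {{a. left_quot C a \<in> p} | C. C \<in> p})"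
    using q unfolding ufs_def by blast
qed

text \<open>In a minimal closed subsemigroup \<open>ufs M\<close>, every \<open>p\<close> has a left unit \<open>q * p = p\<close>: the
  right orbit \<open>ufs M * p\<close> is a closed subsemigroup (described by \<open>G\<close> below) contained in
  \<open>ufs M\<close>, hence equal to it, and it contains \<open>p\<close>.\<close>

lemma minimal_left_unit:
  fixes M :: "'a::semigroup_mult set set"
  assumes M: "set_filter M" "mult_closed (ufs M)"
    and minimal: "\<And>G. M \<subseteq> G \<Longrightarrow> ufs G \<noteq> {} \<Longrightarrow> mult_closed (ufs G) \<Longrightarrow> ufs G = ufs M"
    and pM: "p \<in> ufs M"
  shows "\<exists>q\<in>ufs M. ult_mult q p = p"
proof -
  have M_uf: "is_ultrafilter q" if "q \<in> ufs M" for q using that unfolding ufs_def by blast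
  have M_mult: "ult_mult q q' \<in> ufs M" if "q \<in> ufs M" "q' \<in> ufs M" for q q'
    using M(2) that unfolding mult_closed_def by blast
  note p = M_uf[OF pM]
  define G where "G = {C. \<forall>q\<in>ufs M. C \<in> ult_mult q p}"
  have "M \<subseteq> G"
  proof
    fix A assume "A \<in> M"
    have "A \<in> ult_mult q p" if "q \<in> ufs M" for q
      using M_mult[OF that pM] \<open>A \<in> M\<close> unfolding ufs_def by blast
    then show "A \<in> G" unfolding G_def by blast
  qed
  moreover have "ult_mult p p \<in> ufs G"
    using pM ult_mult_ultrafilter[OF p p] unfolding G_def ufs_def by blast
  moreover have "mult_closed (ufs G)" unfolding mult_closed_def
  proof (intro ballI)
    fix r1 r2 assume r: "r1 \<in> ufs G" "r2 \<in> ufs G"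
    obtain q2 where q2: "q2 \<in> ufs M" "r2 = ult_mult q2 p"
      using right_orbit_closed[OF p M(1)] r(2) unfolding ufs_def G_def by blast
    have "r1 \<in> ufs M" using r(1) \<open>M \<subseteq> G\<close> unfolding ufs_def by blast
    then have "ult_mult r1 q2 \<in> ufs M" using M_mult q2(1) by blast
    moreover have "ult_mult r1 r2 = ult_mult (ult_mult r1 q2) p"
      using q2(2) ult_mult_assoc[OF M_uf[OF \<open>r1 \<in> ufs M\<close>] M_uf[OF q2(1)] p] by simp
    ultimately have "G \<subseteq> ult_mult r1 r2" unfolding G_def by (simp only: mem_Collect_eq subset_iff) metis
    moreover have "is_ultrafilter (ult_mult r1 r2)"
      using r ult_mult_ultrafilter unfolding ufs_def by blast
    ultimately show "ult_mult r1 r2 \<in> ufs G" unfolding ufs_def by blast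
  qed
  ultimately have "ufs G = ufs M" using minimal by blast
  then have "G \<subseteq> p" using pM unfolding ufs_def by blast
  then show ?thesis using right_orbit_closed[OF p M(1) p] unfolding G_def by metis
qed

text \<open>Take
  \<open>p\<close> in a minimal closed subsemigroup \<open>ufs M\<close>; its stabiliser \<open>{q \<in> ufs M. q * p = p}\<close> is a
  closed subsemigroup, nonempty by the previous lemma, hence all of \<open>ufs M\<close>; so it contains
  \<open>p\<close>.\<close>

theorem ellis_numakura:
  fixes F0 :: "'a::semigroup_mult set set"
  assumes "ufs F0 \<noteq> {}" "mult_closed (ufs F0)"
  shows "\<exists>p\<in>ufs F0. ult_mult p p = p"
proof -
  obtain M where M: "set_filter M" "F0 \<subseteq> M" "ufs M \<noteq> {}" "mult_closed (ufs M)"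
    and minimal: "\<And>G. M \<subseteq> G \<Longrightarrow> ufs G \<noteq> {} \<Longrightarrow> mult_closed (ufs G) \<Longrightarrow> ufs G = ufs M"
    using minimal_closed_subsemigroup[OF assms] by blast
  obtain p where pM: "p \<in> ufs M" using M(3) by blast
  have p: "is_ultrafilter p" using pM unfolding ufs_def by blast
  define S where "S = M \<union> {{a. left_quot C a \<in> p} | C. C \<in> p}"
  have S: "q \<in> ufs S \<longleftrightarrow> q \<in> ufs M \<and> ult_mult q p = p" for q
    unfolding S_def by (rule ufs_stabiliser[OF p])
  have "mult_closed (ufs S)" unfolding mult_closed_def
  proof (intro ballI)
    fix q1 q2 assume "q1 \<in> ufs S" "q2 \<in> ufs S"
    then have q: "q1 \<in> ufs M" "q2 \<in> ufs M" "ult_mult q1 p = p" "ult_mult q2 p = p" using S by auto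
    then have "is_ultrafilter q1" "is_ultrafilter q2" unfolding ufs_def by auto
    then have "ult_mult (ult_mult q1 q2) p = p" using ult_mult_assoc[OF _ _ p] q(3,4) by simp
    moreover have "ult_mult q1 q2 \<in> ufs M" using M(4) q(1,2) unfolding mult_closed_def by blast
    ultimately show "ult_mult q1 q2 \<in> ufs S" using S by blast
  qed
  moreover have "ufs S \<noteq> {}"
    using minimal_left_unit[OF M(1,4) minimal pM] S by blast
  moreover have "M \<subseteq> S" unfolding S_def by blast
  ultimately have "ufs S = ufs M" using minimal by blast
  then have "ult_mult p p = p" using S pM by blast
  moreover have "p \<in> ufs F0" using pM M(2) unfolding ufs_def by blast
  ultimately show ?thesis by blast
qed


subsection \<open>Infinite linear subsemigroups\<close>

lemma ult_mult_left_zero_sequence: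
  fixes k :: "nat \<Rightarrow> 'a::semigroup_mult"
  assumes u: "is_ultrafilter u" and tails_u: "\<And>i. k ` {n. i < n} \<in> u"
    and v: "is_ultrafilter v" and tails_v: "\<And>i. k ` {n. i < n} \<in> v"
    and left_zero: "\<And>i j. i < j \<Longrightarrow> k i * k j = k i"
  shows "ult_mult u v = u"
proof -
  have "u \<subseteq> ult_mult u v"
  proof
    fix C assume "C \<in> u"
    have "C \<inter> k ` {n. 0 < n} \<subseteq> {a. left_quot C a \<in> v}"
    proof
      fix a assume "a \<in> C \<inter> k ` {n. 0 < n}"
      then obtain i where a: "a = k i" "k i \<in> C" by blast
      have "k ` {n. i < n} \<subseteq> left_quot C a" unfolding left_quot_def using a left_zero by auto
      then show "a \<in> {a. left_quot C a \<in> v}" using tails_v uf_up[OF v] by blast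
    qed
    moreover have "C \<inter> k ` {n. 0 < n} \<in> u" using uf_Int_iff[OF u] \<open>C \<in> u\<close> tails_u by blast
    ultimately show "C \<in> ult_mult u v" using ult_mult_iff[OF u v] uf_up[OF u] by blast
  qed
  then show ?thesis using ultrafilter_eqI[OF u ult_mult_ultrafilter[OF u v]] by (simp only: eq_commute)
qed

lemma ult_mult_right_zero_sequence:
  fixes k :: "nat \<Rightarrow> 'a::semigroup_mult"
  assumes u: "is_ultrafilter u" and tails_u: "\<And>i. k ` {n. i < n} \<in> u"
    and v: "is_ultrafilter v" and tails_v: "\<And>i. k ` {n. i < n} \<in> v"
    and right_zero: "\<And>i j. i < j \<Longrightarrow> k i * k j = k j"
  shows "ult_mult u v = v"
proof -
  have "v \<subseteq> ult_mult u v"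
  proof
    fix C assume "C \<in> v"
    have "k ` {n. 0 < n} \<subseteq> {a. left_quot C a \<in> v}"
    proof
      fix a assume "a \<in> k ` {n. 0 < n}"
      then obtain i where a: "a = k i" by blast
      have "C \<inter> k ` {n. i < n} \<subseteq> left_quot C a" unfolding left_quot_def using a right_zero by auto
      moreover have "C \<inter> k ` {n. i < n} \<in> v" using uf_Int_iff[OF v] \<open>C \<in> v\<close> tails_v by blast
      ultimately show "a \<in> {a. left_quot C a \<in> v}" using uf_up[OF v] by blast
    qed
    then show "C \<in> ult_mult u v" using ult_mult_iff[OF u v] uf_up[OF u] tails_u by blast
  qed
  then show ?thesis using ultrafilter_eqI[OF v ult_mult_ultrafilter[OF u v]] by (simp only: eq_commute)
qed

text \<open>An injective sequence has two distinct ultrafilters containing all of its tails: one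
  concentrated on the even-indexed terms, one on the odd-indexed terms.\<close>

lemma two_tail_ultrafilters:
  fixes k :: "nat \<Rightarrow> 'a"
  assumes "inj k"
  obtains p q where "is_ultrafilter p" "\<And>i. k ` {n. i < n} \<in> p"
    "is_ultrafilter q" "\<And>i. k ` {n. i < n} \<in> q" "p \<noteq> q"
proof -
  define A where "A r m = k ` {n. m \<le> n \<and> n mod 2 = r}" for r m :: nat
  have exists: "\<exists>p. is_ultrafilter p \<and> (\<forall>m. A r m \<in> p)" if "r < 2" for r
  proof (rule ultrafilter_extends_chain)
    show "antimono (A r)" unfolding A_def by (rule antimonoI) auto
    fix m have "2 * m + r \<in> {n. m \<le> n \<and> n mod 2 = r}" using that by auto
    then show "A r m \<noteq> {}" unfolding A_def by blast
  qed
  obtain p where p: "is_ultrafilter p" "\<And>m. A 0 m \<in> p" using exists[of 0] by auto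
  obtain q where q: "is_ultrafilter q" "\<And>m. A 1 m \<in> q" using exists[of 1] by auto
  have "A 0 0 \<inter> A 1 0 = {}" unfolding A_def by (auto simp: inj_eq[OF assms])
  moreover have "A 0 0 \<in> p" "A 1 0 \<in> q" using p(2) q(2) by blast+
  ultimately have "p \<noteq> q" using uf_disjoint[OF p(1)] by metis
  moreover have "k ` {n. i < n} \<in> p" "k ` {n. i < n} \<in> q" for i
  proof -
    have "A r (Suc i) \<subseteq> k ` {n. i < n}" for r unfolding A_def by auto
    then show "k ` {n. i < n} \<in> p" "k ` {n. i < n} \<in> q"
      using uf_up[OF p(1) p(2)] uf_up[OF q(1) q(2)] by blast+
  qed
  ultimately show thesis using that[OF p(1) _ q(1)] by blast
qed

lemma linear_semigroup_zero_sequence: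
  fixes S :: "'a::semigroup_mult set"
  assumes "linear_semigroup S" "infinite S"
  obtains k :: "nat \<Rightarrow> 'a" where "inj k"
    "(\<forall>i j. i < j \<longrightarrow> k i * k j = k i) \<or> (\<forall>i j. i < j \<longrightarrow> k i * k j = k j)"
proof -
  obtain h :: "nat \<Rightarrow> 'a" where h: "inj h" "range h \<subseteq> S"
    using infinite_countable_subset[OF assms(2)] by blast
  define colour where "colour X = (if h (Min X) * h (Max X) = h (Min X) then 0 else (1::nat))" for X
  have "\<forall>x\<in>UNIV. \<forall>y\<in>UNIV. x \<noteq> y \<longrightarrow> colour {x, y} < 2" unfolding colour_def by auto
  from Ramsey2[OF infinite_UNIV_nat this] obtain Y t where Y: "infinite Y" "t < 2"
    "\<forall>x\<in>Y. \<forall>y\<in>Y. x \<noteq> y \<longrightarrow> colour {x, y} = t" by blast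
  define k where "k = h \<circ> enumerate Y"
  have mono: "strict_mono (enumerate Y)" using strict_mono_enumerate[OF Y(1)] .
  have "inj k" unfolding k_def by (rule inj_compose[OF h(1) strict_mono_imp_inj_on[OF mono]])
  have colour_k: "k i * k j = k i \<longleftrightarrow> t = 0" if "i < j" for i j
  proof -
    have lt: "enumerate Y i < enumerate Y j" using mono that unfolding strict_mono_def by blast
    have "colour {enumerate Y i, enumerate Y j} = t" using Y(3) enumerate_in_set[OF Y(1)] lt by auto
    moreover have "Min {enumerate Y i, enumerate Y j} = enumerate Y i"
      "Max {enumerate Y i, enumerate Y j} = enumerate Y j" using lt by auto
    ultimately show ?thesis unfolding colour_def k_def by (auto split: if_splits)
  qed
  have "k i * k j = k j" if "t \<noteq> 0" "i < j" for i j
  proof -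
    have "k i \<in> S" "k j \<in> S" using h(2) unfolding k_def by auto
    then have "k i * k j \<in> {k i, k j}" using assms(1) unfolding linear_semigroup_def by blast
    then show ?thesis using colour_k[OF that(2)] that(1) by blast
  qed
  then have "(\<forall>i j. i < j \<longrightarrow> k i * k j = k i) \<or> (\<forall>i j. i < j \<longrightarrow> k i * k j = k j)"
    using colour_k by (cases "t = 0") auto
  with \<open>inj k\<close> show thesis by (rule that)
qed

text \<open>Hence an infinite linear subsemigroup yields a left or right zero band \<open>{p, q}\<close> of two
  distinct idempotents in \<open>\<beta>(X)\<close>, which do not commute.\<close>

lemma linear_noncommuting_idempotents:
  fixes S :: "'a::semigroup_mult set"
  assumes "linear_semigroup S" "infinite S"
  shows "\<exists>p q :: 'a set set. ult_idempotent p \<and> ult_idempotent q \<and> ult_mult p q \<noteq> ult_mult q p"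
proof -
  obtain k :: "nat \<Rightarrow> 'a" where k: "inj k"
    and zero: "(\<forall>i j. i < j \<longrightarrow> k i * k j = k i) \<or> (\<forall>i j. i < j \<longrightarrow> k i * k j = k j)"
    using linear_semigroup_zero_sequence[OF assms] by blast
  obtain p q where p: "is_ultrafilter p" "\<And>i. k ` {n. i < n} \<in> p"
    and q: "is_ultrafilter q" "\<And>i. k ` {n. i < n} \<in> q" and "p \<noteq> q"
    using two_tail_ultrafilters[OF k] by metis
  from zero have "ult_mult p p = p \<and> ult_mult q q = q \<and> ult_mult p q \<noteq> ult_mult q p"
  proof
    assume "\<forall>i j. i < j \<longrightarrow> k i * k j = k i"
    then have lz: "\<And>i j. i < j \<Longrightarrow> k i * k j = k i" by blast
    note left = ult_mult_left_zero_sequence[where k = k, OF _ _ _ _ lz]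
    show ?thesis using left[OF p p] left[OF q q] left[OF p q] left[OF q p] \<open>p \<noteq> q\<close> by simp
  next
    assume "\<forall>i j. i < j \<longrightarrow> k i * k j = k j"
    then have rz: "\<And>i j. i < j \<Longrightarrow> k i * k j = k j" by blast
    note right = ult_mult_right_zero_sequence[where k = k, OF _ _ _ _ rz]
    show ?thesis using right[OF p p] right[OF q q] right[OF p q] right[OF q p] \<open>p \<noteq> q\<close> by simp
  qed
  moreover have "ult_idempotent p" "ult_idempotent q"
    using calculation p(1) q(1) unfolding ult_idempotent_def by blast+
  ultimately show ?thesis by blast
qed


subsection \<open>Infinite cyclic subsemigroups\<close>

lemma spow_add: "spow x m * spow x n = spow x (m + n + 1)"
  by (induction n) (simp_all add: mult.assoc[symmetric])

text \<open>A repetition among the powers of \<open>x\<close> makes them eventually periodic, hence finite.\<close>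

lemma spow_repeat_finite:
  assumes "spow x i = spow x j" "i < j"
  shows "finite (range (spow x))"
proof -
  define d where "d = j - i"
  have period: "spow x (i + m + d) = spow x (i + m)" for m
  proof (induction m)
    case 0 then show ?case using assms unfolding d_def by simp
  next
    case (Suc m)
    have "spow x (i + Suc m + d) = spow x (i + m + d) * x" by (simp add: add.commute add.left_commute)
    also have "\<dots> = spow x (i + m) * x" using Suc by simp
    finally show ?case by simp
  qed
  have "spow x n \<in> spow x ` {..<j}" for n
  proof (induction n rule: less_induct)
    case (less n)
    show ?case
    proof (cases "n < j")
      case False
      then have "n = i + (n - d - i) + d" "n - d < n" using assms unfolding d_def by auto
      then have "spow x n = spow x (n - d)" using period[of "n - d - i"] by (metis add_diff_cancel_right')
      then show ?thesis using less \<open>n - d < n\<close> by simp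
    qed blast
  qed
  then have "range (spow x) \<subseteq> spow x ` {..<j}" by blast
  then show ?thesis using finite_subset by blast
qed

lemma spow_inj:
  assumes "infinite (range (spow x))"
  shows "inj (spow x)"
proof (rule injI, rule ccontr)
  fix i j assume "spow x i = spow x j" "i \<noteq> j"
  then show False
    using spow_repeat_finite[of x i j] spow_repeat_finite[of x j i] assms by (cases "i < j") auto
qed

text \<open>\<open>exact_pow2 j N\<close>: \<open>2^j\<close> is the exact power of 2 dividing \<open>N\<close>.\<close>

definition exact_pow2 :: "nat \<Rightarrow> nat \<Rightarrow> bool" where
  "exact_pow2 j N \<longleftrightarrow> N mod 2 ^ (j + 1) = 2 ^ j"

lemma exact_pow2_nonzero: "exact_pow2 j N \<Longrightarrow> N \<noteq> 0"
  unfolding exact_pow2_def by (metis mod_0 power_not_zero zero_neq_numeral)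

lemma exact_pow2_self: "exact_pow2 j (2 ^ j)"
  unfolding exact_pow2_def by simp

lemma exact_pow2_unique:
  assumes "exact_pow2 j N" "exact_pow2 j' N"
  shows "j = j'"
proof (rule ccontr)
  \<comment> \<open>If \<open>j < j'\<close> then \<open>2^(j+1)\<close> divides \<open>N\<close>, contradicting \<open>exact_pow2 j N\<close>.\<close>
  have False if "exact_pow2 j N" "exact_pow2 j' N" "j < j'" for j j'
  proof -
    have "(2::nat) ^ (j + 1) dvd 2 ^ j'" by (rule le_imp_power_dvd) (use that(3) in simp)
    moreover have "(2::nat) ^ (j + 1) dvd 2 ^ (j' + 1)" by (rule le_imp_power_dvd) (use that(3) in simp)
    ultimately have "(2::nat) ^ (j + 1) dvd N"
      using that(2) unfolding exact_pow2_def by (metis dvd_mod_iff)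
    then show False using that(1) unfolding exact_pow2_def by simp
  qed
  moreover assume "j \<noteq> j'"
  ultimately show False using assms by (metis nat_neq_iff)
qed

lemma exact_pow2_add:
  assumes "exact_pow2 j N" "2 ^ (j + 1) dvd M"
  shows "exact_pow2 j (N + M)"
proof -
  obtain c where "M = 2 ^ (j + 1) * c" using assms(2) by blast
  then have "(N + M) mod 2 ^ (j + 1) = N mod 2 ^ (j + 1)" by simp
  then show ?thesis using assms(1) unfolding exact_pow2_def by simp
qed

definition val_class :: "nat \<Rightarrow> nat \<Rightarrow> nat set" where
  "val_class r k = {N. 2 ^ k dvd N \<and> (\<exists>j. j mod 2 = r \<and> exact_pow2 j N)}"

lemma val_class_nonempty:
  assumes "r < 2"
  shows "2 ^ (2 * k + r) \<in> val_class r k"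
proof -
  have "(2::nat) ^ k dvd 2 ^ (2 * k + r)" by (simp add: le_imp_power_dvd)
  moreover have "(2 * k + r) mod 2 = r" using assms by simp
  ultimately show ?thesis unfolding val_class_def using exact_pow2_self by blast
qed

lemma val_class_antimono: "antimono (val_class r)"
proof (rule antimonoI)
  fix k k' :: nat assume "k \<le> k'"
  then have "(2::nat) ^ k dvd 2 ^ k'" by (rule le_imp_power_dvd)
  then show "val_class r k' \<subseteq> val_class r k" unfolding val_class_def using dvd_trans by blast
qed

lemma val_class_disjoint: "val_class 0 k \<inter> val_class 1 k = {}"
proof (rule equals0I)
  fix N assume "N \<in> val_class 0 k \<inter> val_class 1 k"
  then have "\<exists>j. j mod 2 = 0 \<and> exact_pow2 j N" "\<exists>j. j mod 2 = 1 \<and> exact_pow2 j N"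
    unfolding val_class_def by blast+
  then show False using exact_pow2_unique by (metis zero_neq_one)
qed

lemma val_class_add:
  assumes "N \<in> val_class r k" "exact_pow2 j N" "2 ^ (j + k + 1) dvd M"
  shows "N + M \<in> val_class r k"
proof -
  have "(2::nat) ^ k dvd 2 ^ (j + k + 1)" "(2::nat) ^ (j + 1) dvd 2 ^ (j + k + 1)"
    by (simp_all add: le_imp_power_dvd)
  then have "2 ^ k dvd M" "2 ^ (j + 1) dvd M" using assms(3) dvd_trans by blast+
  obtain j0 where j0: "j0 mod 2 = r" "exact_pow2 j0 N" "2 ^ k dvd N"
    using assms(1) unfolding val_class_def by blast
  then have "j0 = j" using assms(2) exact_pow2_unique by blast
  then have "exact_pow2 j0 (N + M)" using exact_pow2_add assms(2) \<open>2 ^ (j + 1) dvd M\<close> by blast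
  moreover have "2 ^ k dvd N + M" using j0(3) \<open>2 ^ k dvd M\<close> by (rule dvd_add)
  ultimately show ?thesis using j0(1) unfolding val_class_def by blast
qed

context
  fixes x :: "'a::semigroup_mult"
begin

text \<open>\<open>pow_set r k\<close> is the set of powers \<open>x^N\<close> with \<open>N \<in> val_class r k\<close> (recall that
  \<open>spow x n = x^(n+1)\<close>).\<close>

definition pow_set :: "nat \<Rightarrow> nat \<Rightarrow> 'a set" where
  "pow_set r k = (\<lambda>N. spow x (N - 1)) ` val_class r k"

lemma pow_set_mult:
  assumes "N \<noteq> 0" "M \<noteq> 0"
  shows "spow x (N - 1) * spow x (M - 1) = spow x (N + M - 1)"
proof -
  have "N - 1 + (M - 1) + 1 = N + M - 1" using assms by simp
  then show ?thesis by (metis spow_add)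
qed

lemma pow_set_in_mult:
  assumes p: "p \<in> ufs (range (pow_set r))" and q: "q \<in> ufs (range (pow_set s))"
  shows "pow_set r k \<in> ult_mult p q"
proof -
  have p_uf: "is_ultrafilter p" and q_uf: "is_ultrafilter q" using p q unfolding ufs_def by auto
  have "pow_set r k \<subseteq> {a. left_quot (pow_set r k) a \<in> q}"
  proof
    fix a assume "a \<in> pow_set r k"
    then obtain N j where N: "a = spow x (N - 1)" "N \<in> val_class r k" "exact_pow2 j N"
      unfolding pow_set_def val_class_def by blast
    have "pow_set s (j + k + 1) \<subseteq> left_quot (pow_set r k) a"
    proof
      fix b assume "b \<in> pow_set s (j + k + 1)"
      then obtain M j' where M: "b = spow x (M - 1)" "2 ^ (j + k + 1) dvd M" "exact_pow2 j' M"
        unfolding pow_set_def val_class_def by blast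
      have "a * b = spow x (N + M - 1)"
        using pow_set_mult exact_pow2_nonzero N(1,3) M(1,3) by simp
      moreover have "N + M \<in> val_class r k" using val_class_add N(2,3) M(2) .
      ultimately show "b \<in> left_quot (pow_set r k) a" unfolding left_quot_def pow_set_def by auto
    qed
    moreover have "pow_set s (j + k + 1) \<in> q" using q unfolding ufs_def by blast
    ultimately show "a \<in> {a. left_quot (pow_set r k) a \<in> q}" using uf_up[OF q_uf] by blast
  qed
  moreover have "pow_set r k \<in> p" using p unfolding ufs_def by blast
  ultimately show ?thesis using ult_mult_iff[OF p_uf q_uf] uf_up[OF p_uf] by blast
qed

lemma pow_set_closed_subsemigroup:
  assumes "r < 2"
  shows "ufs (range (pow_set r)) \<noteq> {}" "mult_closed (ufs (range (pow_set r)))"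
proof -
  have "antimono (pow_set r)"
    using val_class_antimono unfolding pow_set_def antimono_def by (simp add: image_mono)
  moreover have "pow_set r k \<noteq> {}" for k
    using val_class_nonempty[OF assms] unfolding pow_set_def by blast
  ultimately obtain p where "is_ultrafilter p" "\<forall>k. pow_set r k \<in> p"
    using ultrafilter_extends_chain by blast
  then show "ufs (range (pow_set r)) \<noteq> {}" unfolding ufs_def by blast
  show "mult_closed (ufs (range (pow_set r)))" unfolding mult_closed_def
  proof (intro ballI)
    fix p q assume pq: "p \<in> ufs (range (pow_set r))" "q \<in> ufs (range (pow_set r))"
    then have "is_ultrafilter (ult_mult p q)" using ult_mult_ultrafilter unfolding ufs_def by blast
    moreover have "range (pow_set r) \<subseteq> ult_mult p q" using pow_set_in_mult[OF pq] by blast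
    ultimately show "ult_mult p q \<in> ufs (range (pow_set r))" unfolding ufs_def by blast
  qed
qed

lemma pow_set_disjoint:
  assumes "inj (spow x)"
  shows "pow_set 0 0 \<inter> pow_set 1 0 = {}"
proof -
  have inj: "inj_on (\<lambda>N. spow x (N - 1)) {N. N \<noteq> 0}"
  proof (rule inj_onI)
    fix N M assume N: "N \<in> {N. N \<noteq> 0}" and M: "M \<in> {N. N \<noteq> 0}"
      and "spow x (N - 1) = spow x (M - 1)"
    then have "N - 1 = M - 1" using injD[OF assms] by blast
    then show "N = M" using N M by simp
  qed
  have sub: "val_class r k \<subseteq> {N. N \<noteq> 0}" for r k
    unfolding val_class_def using exact_pow2_nonzero by blast
  have "pow_set 0 0 \<inter> pow_set 1 0 = (\<lambda>N. spow x (N - 1)) ` (val_class 0 0 \<inter> val_class 1 0)"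
    unfolding pow_set_def by (rule inj_on_image_Int[OF inj sub sub, symmetric])
  then show ?thesis using val_class_disjoint by simp
qed

end

text \<open>Hence an infinite cyclic subsemigroup yields, by Ellis--Numakura, idempotents \<open>p\<close> and
  \<open>q\<close> with \<open>pow_set 0 0 \<in> p * q\<close> and \<open>pow_set 1 0 \<in> q * p\<close>, so \<open>p * q \<noteq> q * p\<close>.\<close>

lemma cyclic_noncommuting_idempotents:
  fixes x :: "'a::semigroup_mult"
  assumes "infinite (range (spow x))"
  shows "\<exists>p q :: 'a set set. ult_idempotent p \<and> ult_idempotent q \<and> ult_mult p q \<noteq> ult_mult q p"
proof -
  obtain p where p: "p \<in> ufs (range (pow_set x 0))" "ult_mult p p = p"
    using ellis_numakura pow_set_closed_subsemigroup[of 0 x] by auto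
  obtain q where q: "q \<in> ufs (range (pow_set x 1))" "ult_mult q q = q"
    using ellis_numakura pow_set_closed_subsemigroup[of 1 x] by auto
  have "pow_set x 0 0 \<in> ult_mult p q" "pow_set x 1 0 \<in> ult_mult q p"
    using pow_set_in_mult p(1) q(1) by blast+
  moreover have "is_ultrafilter (ult_mult p q)"
    using p(1) q(1) ult_mult_ultrafilter unfolding ufs_def by blast
  ultimately have "ult_mult p q \<noteq> ult_mult q p"
    using pow_set_disjoint[OF spow_inj[OF assms]] uf_disjoint by metis
  moreover have "ult_idempotent p" "ult_idempotent q"
    using p q unfolding ult_idempotent_def ufs_def by auto
  ultimately show ?thesis by blast
qed


theorem proposition2p1:
  fixes X_type :: "'a::semigroup_mult itself"
  assumes "\<forall>p q :: 'a set set. ult_idempotent p \<and> ult_idempotent q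
             \<longrightarrow> ult_mult p q = ult_mult q p"
  shows "(\<forall>S :: 'a set. subsemigroup S \<and> cyclic_semigroup S \<longrightarrow> finite S) \<and>
         (\<forall>S :: 'a set. subsemigroup S \<and> linear_semigroup S \<longrightarrow> finite S)"
proof (intro conjI allI impI; elim conjE)
  fix S :: "'a set"
  assume "cyclic_semigroup S"
  then obtain x where "S = range (spow x)" unfolding cyclic_semigroup_def by blast
  then show "finite S" using cyclic_noncommuting_idempotents[of x] assms by blast
next
  fix S :: "'a set"
  assume "linear_semigroup S"
  then show "finite S" using linear_noncommuting_idempotents[of S] assms by blast
qed

end
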